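(* Let $U=(\mathcal{L}_1\otimes\mathcal{L}_2)\,\Omega\,(\mathcal{R}_1\otimes\mathcal{R}_2)$ be a two-qubit unitary, where $\mathcal{L}_i,\mathcal{R}_i$ are single-qubit unitaries and $$\Omega = e^{-i(\alpha_1\hat\sigma_1\otimes\hat\sigma_1+\alpha_2\hat\sigma_2\otimes\hat\sigma_2+\alpha_3\hat\sigma_3\otimes\hat\sigma_3)}$$ with $\hat\sigma_i$ the Pauli matrices. Let $c_i=\cos(4\alpha_i)$ and suppose $$\frac{3-c_1(c_2+c_3)-c_2c_3}{4}=0.$$ Then for every two-qubit density operator $\rho^{SE}$, with $\rho^S=\operatorname{Tr}_E\rho^{SE}$, there exists a single-qubit density operator $\zeta^E$ such that $\operatorname{Tr}_E(U\rho^{SE}U^\dagger)=\operatorname{Tr}_E(U(\rho^S\otimes\zeta^E)U^\dagger)$, i.e. the system dynamics can be $U$-generated by a product state.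
   Context: The quantity $\frac{3-c_1(c_2+c_3)-c_2c_3}{4}$ is the normalized entangling power of $U$. "$U$-generated by a product state" means existence of a valid environment state $\zeta^E$ with the displayed equality. *)

theory Defs
  imports "HOL-Analysis.Analysis"
begin

(* Matrices are complex^'n^'m (rows indexed by 'm). A qubit has index type 2
   (basis states 0, 1); a two-qubit system S (x) E has index type 2 \<times> 2,
   first component = system S, second = environment E. *)

definition madj :: "complex^'n^'m \<Rightarrow> complex^'m^'n" where
  "madj A = (\<chi> i j. cnj (A $ j $ i))"

definition munitary :: "complex^'n^'n \<Rightarrow> bool" where
  "munitary U \<longleftrightarrow> U ** madj U = mat 1 \<and> madj U ** U = mat 1"

definition mtrace :: "complex^'n^'n \<Rightarrow> complex" where
  "mtrace M = (\<Sum>i\<in>UNIV. M $ i $ i)"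

definition mpsd :: "complex^'n^'n \<Rightarrow> bool" where
  "mpsd M \<longleftrightarrow> madj M = M \<and>
     (\<forall>v::complex^'n. 0 \<le> Re (\<Sum>i\<in>UNIV. \<Sum>j\<in>UNIV. cnj (v $ i) * M $ i $ j * v $ j))"

definition density :: "complex^'n^'n \<Rightarrow> bool" where
  "density M \<longleftrightarrow> mpsd M \<and> mtrace M = 1"

definition tensor :: "complex^'a::finite^'a \<Rightarrow> complex^'b::finite^'b \<Rightarrow> complex^('a\<times>'b)^('a\<times>'b)"
  (infixl \<open>\<otimes>\<^sub>m\<close> 75) where
  "A \<otimes>\<^sub>m B = (\<chi> p q. A $ fst p $ fst q * B $ snd p $ snd q)"

definition ptrace_E :: "complex^('a::finite\<times>'b::finite)^('a\<times>'b) \<Rightarrow> complex^'a^'a" where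
  "ptrace_E M = (\<chi> i k. \<Sum>j\<in>UNIV. M $ (i, j) $ (k, j))"

definition msmult :: "complex \<Rightarrow> complex^'n^'m \<Rightarrow> complex^'n^'m" where
  "msmult c A = (\<chi> i j. c * A $ i $ j)"

primrec mpow :: "complex^'n^'n \<Rightarrow> nat \<Rightarrow> complex^'n^'n" where
  "mpow A 0 = mat 1"
| "mpow A (Suc n) = A ** mpow A n"

definition mexp :: "complex^'n^'n \<Rightarrow> complex^'n^'n" where
  "mexp A = (\<chi> i j. \<Sum>n. mpow A n $ i $ j / fact n)"

definition pauli1 :: "complex^2^2" where
  "pauli1 = (\<chi> i j. if i = j then 0 else 1)"

definition pauli2 :: "complex^2^2" where
  "pauli2 = (\<chi> i j. if i = j then 0 else if i = 0 then - \<i> else \<i>)"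

definition pauli3 :: "complex^2^2" where
  "pauli3 = (\<chi> i j. if i \<noteq> j then 0 else if i = 0 then 1 else -1)"

definition Omega :: "real \<Rightarrow> real \<Rightarrow> real \<Rightarrow> complex^(2\<times>2)^(2\<times>2)" where
  "Omega a1 a2 a3 = mexp (msmult (- \<i>)
     (msmult (of_real a1) (pauli1 \<otimes>\<^sub>m pauli1) + msmult (of_real a2) (pauli2 \<otimes>\<^sub>m pauli2)
      + msmult (of_real a3) (pauli3 \<otimes>\<^sub>m pauli3)))"

end

theory Submission
  imports Defs
begin

(* Vanishing entangling power means c1 (c2 + c3) + c2 c3 = 3 with all |ci| <= 1; since every
   product ci cj is at most 1, all of them equal 1, so cos 4a1 = cos 4a2 = cos 4a3 = e with
   e = 1 or e = -1. Omega is diagonal in the Bell basis, and under this condition it is, up to a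
   global phase, a local gate P \<otimes> P (e = 1) or the swap gate composed with P \<otimes> P (e = -1).
   For a local gate X \<otimes> Y the reduced dynamics Tr_E (U rho U* ) = X rho_S X* depends only on
   rho_S = Tr_E rho; after a swap it is Y rho_E Y* with rho_E = Tr_S rho. The product
   rho_S \<otimes> rho_E has the same two marginals as rho, so zeta = Tr_S rho works in both cases. *)

lemma sum_UNIV_prod: "(\<Sum>p\<in>UNIV. f p) = (\<Sum>i\<in>UNIV. \<Sum>j\<in>UNIV. f (i, j))"
  by (simp add: sum.cartesian_product split_def)

lemma sum_sum_delta:
  fixes f :: "'a::finite \<Rightarrow> 'b::finite \<Rightarrow> complex"
  shows "(\<Sum>j'\<in>UNIV. \<Sum>i\<in>UNIV. if j = j' then f i j' else 0) = (\<Sum>i\<in>UNIV. f i j)"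
    and "(\<Sum>j'\<in>UNIV. \<Sum>i\<in>UNIV. if j' = j then f i j' else 0) = (\<Sum>i\<in>UNIV. f i j)"
  by (subst sum.swap, simp)+

lemma sum_fst_eq:
  fixes g :: "'a::finite \<times> 'b::finite \<Rightarrow> 'c::comm_monoid_add"
  shows "(\<Sum>p | fst p = i. g p) = (\<Sum>j\<in>UNIV. g (i, j))"
proof -
  have "{p. fst p = i} = Pair i ` (UNIV :: 'b set)" by auto
  then show ?thesis by (simp add: sum.reindex inj_on_def)
qed

lemma mult_indicator:
  "(a::complex) * (if P then 1 else 0) = (if P then a else 0)"
  "(if P then 1 else 0) * (a::complex) = (if P then a else 0)"
  "(if P then a else 0) * (b::complex) = (if P then a * b else 0)"
  "(b::complex) * (if P then a else 0) = (if P then b * a else 0)"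
  by auto

lemma madj_mult: "madj (A ** B) = madj B ** madj A"
  by (simp add: vec_eq_iff madj_def matrix_matrix_mult_def mult_ac)

lemma madj_tensor: "madj (A \<otimes>\<^sub>m B) = madj A \<otimes>\<^sub>m madj B"
  by (simp add: vec_eq_iff madj_def tensor_def)

lemma madj_msmult: "madj (msmult c A) = msmult (cnj c) (madj A)"
  by (simp add: vec_eq_iff msmult_def madj_def)

lemma madj_mat_1: "madj (mat 1) = mat 1"
  by (simp add: madj_def mat_def vec_eq_iff)

lemma tensor_mult: "(A \<otimes>\<^sub>m B) ** (C \<otimes>\<^sub>m D) = (A ** C) \<otimes>\<^sub>m (B ** D)"
  by (simp add: vec_eq_iff tensor_def matrix_matrix_mult_def sum_UNIV_prod sum_product mult_ac)

lemma tensor_mat_1: "mat 1 \<otimes>\<^sub>m mat 1 = mat 1"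
  by (auto simp add: vec_eq_iff tensor_def mat_def prod_eq_iff)

lemma matrix_mult_msmult_left: "msmult c A ** B = msmult c (A ** B)"
  by (simp add: vec_eq_iff msmult_def matrix_matrix_mult_def sum_distrib_left mult_ac)

lemma matrix_mult_msmult_right: "A ** msmult c B = msmult c (A ** B)"
  by (simp add: vec_eq_iff msmult_def matrix_matrix_mult_def sum_distrib_left mult_ac)

lemma msmult_msmult: "msmult c (msmult d A) = msmult (c * d) A"
  by (simp add: vec_eq_iff msmult_def mult_ac)

lemma msmult_1: "msmult 1 A = A"
  by (simp add: vec_eq_iff msmult_def)

lemma munitary_mult: "munitary A \<Longrightarrow> munitary B \<Longrightarrow> munitary (A ** B)"
  unfolding munitary_def madj_mult
  by (metis matrix_mul_assoc matrix_mul_lid matrix_mul_rid)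

lemma munitary_mat_1: "munitary (mat 1)"
  by (simp add: munitary_def madj_mat_1)

lemma conj_msmult_phase:
  assumes "c * cnj c = 1"
  shows "msmult c V ** M ** madj (msmult c V) = V ** M ** madj V"
  by (simp add: matrix_mult_msmult_left matrix_mult_msmult_right madj_msmult msmult_msmult
      mult.commute[of "cnj c"] assms msmult_1)

section \<open>Partial traces\<close>

definition ptrace_S :: "complex^('a::finite\<times>'b::finite)^('a\<times>'b) \<Rightarrow> complex^'b^'b" where
  "ptrace_S M = (\<chi> j l. \<Sum>i\<in>UNIV. M $ (i, j) $ (i, l))"

lemma ptrace_E_tensor: "ptrace_E (A \<otimes>\<^sub>m B) = msmult (mtrace B) A"
  by (simp add: vec_eq_iff ptrace_E_def tensor_def msmult_def mtrace_def sum_distrib_left mult_ac)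

lemma ptrace_S_tensor: "ptrace_S (A \<otimes>\<^sub>m B) = msmult (mtrace A) B"
  by (simp add: vec_eq_iff ptrace_S_def tensor_def msmult_def mtrace_def sum_distrib_left mult_ac)

lemma mtrace_ptrace_E: "mtrace (ptrace_E M) = mtrace M"
  by (simp add: mtrace_def ptrace_E_def sum_UNIV_prod)

lemma mtrace_ptrace_S: "mtrace (ptrace_S M) = mtrace M"
  by (simp add: mtrace_def ptrace_S_def sum_UNIV_prod) (rule sum.swap)

lemma ptrace_product_of_marginals:
  assumes "mtrace M = 1"
  shows "ptrace_E (ptrace_E M \<otimes>\<^sub>m ptrace_S M) = ptrace_E M"
    and "ptrace_S (ptrace_E M \<otimes>\<^sub>m ptrace_S M) = ptrace_S M"
  using assms
  by (simp_all add: ptrace_E_tensor ptrace_S_tensor mtrace_ptrace_E mtrace_ptrace_S msmult_1)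

lemma ptrace_E_mult_tensor_mat_1_left: "ptrace_E ((A \<otimes>\<^sub>m mat 1) ** M) = A ** ptrace_E M"
  by (simp add: vec_eq_iff tensor_def matrix_matrix_mult_def ptrace_E_def sum_UNIV_prod mat_def
      sum_distrib_left mult_indicator sum_sum_delta) (intro allI, subst sum.swap, rule refl)

lemma ptrace_E_mult_tensor_mat_1_right: "ptrace_E (M ** (C \<otimes>\<^sub>m mat 1)) = ptrace_E M ** C"
  by (simp add: vec_eq_iff tensor_def matrix_matrix_mult_def ptrace_E_def sum_UNIV_prod mat_def
      sum_distrib_right mult_indicator sum_sum_delta) (intro allI, subst sum.swap, rule refl)

lemma ptrace_E_mult_commute_env:
  "ptrace_E ((mat 1 \<otimes>\<^sub>m B) ** N) = ptrace_E (N ** (mat 1 \<otimes>\<^sub>m B))"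
  by (simp add: vec_eq_iff tensor_def matrix_matrix_mult_def ptrace_E_def sum_UNIV_prod mat_def
      mult_indicator sum_sum_delta) (intro allI, subst sum.swap, simp add: mult_ac)

lemma ptrace_E_conj_env:
  assumes "D ** B = mat 1"
  shows "ptrace_E ((mat 1 \<otimes>\<^sub>m B) ** M ** (mat 1 \<otimes>\<^sub>m D)) = ptrace_E M"
proof -
  have "ptrace_E ((mat 1 \<otimes>\<^sub>m B) ** M ** (mat 1 \<otimes>\<^sub>m D))
      = ptrace_E (M ** ((mat 1 \<otimes>\<^sub>m D) ** (mat 1 \<otimes>\<^sub>m B)))"
    using ptrace_E_mult_commute_env[of B "M ** (mat 1 \<otimes>\<^sub>m D)"] by (simp add: matrix_mul_assoc)
  also have "\<dots> = ptrace_E M"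
    by (simp add: tensor_mult assms tensor_mat_1)
  finally show ?thesis .
qed

lemma ptrace_E_local:
  assumes "D ** B = mat 1"
  shows "ptrace_E ((A \<otimes>\<^sub>m B) ** M ** (C \<otimes>\<^sub>m D)) = A ** ptrace_E M ** C"
proof -
  have "A \<otimes>\<^sub>m B = (A \<otimes>\<^sub>m mat 1) ** (mat 1 \<otimes>\<^sub>m B)"
    and "C \<otimes>\<^sub>m D = (mat 1 \<otimes>\<^sub>m D) ** (C \<otimes>\<^sub>m mat 1)"
    by (simp_all add: tensor_mult)
  then have "(A \<otimes>\<^sub>m B) ** M ** (C \<otimes>\<^sub>m D)
      = (A \<otimes>\<^sub>m mat 1) ** ((mat 1 \<otimes>\<^sub>m B) ** M ** (mat 1 \<otimes>\<^sub>m D)) ** (C \<otimes>\<^sub>m mat 1)"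
    by (simp add: matrix_mul_assoc)
  then show ?thesis
    by (simp add: ptrace_E_mult_tensor_mat_1_left ptrace_E_mult_tensor_mat_1_right
        ptrace_E_conj_env assms)
qed

definition swap_mat :: "complex^('a::finite\<times>'a)^('a\<times>'a)" where
  "swap_mat = (\<chi> p q. if q = prod.swap p then 1 else 0)"

lemma swap_mat_mult_nth: "(swap_mat ** M) $ p $ q = M $ prod.swap p $ q"
  by (simp add: swap_mat_def matrix_matrix_mult_def mult_indicator)

lemma mult_swap_mat_nth: "(M ** swap_mat) $ p $ q = M $ p $ prod.swap q"
proof -
  have "\<And>k. q = prod.swap k \<longleftrightarrow> k = prod.swap q" by auto
  then show ?thesis
    by (simp add: swap_mat_def matrix_matrix_mult_def mult_indicator)
qed

lemma madj_swap_mat: "madj swap_mat = swap_mat"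
  by (auto simp add: vec_eq_iff madj_def swap_mat_def)

lemma swap_mat_mult_tensor: "swap_mat ** (A \<otimes>\<^sub>m B) = (B \<otimes>\<^sub>m A) ** swap_mat"
  by (simp add: vec_eq_iff swap_mat_mult_nth mult_swap_mat_nth tensor_def)

lemma ptrace_S_eq_ptrace_E_swap: "ptrace_S M = ptrace_E (swap_mat ** M ** swap_mat)"
  by (simp add: vec_eq_iff ptrace_S_def ptrace_E_def swap_mat_mult_nth mult_swap_mat_nth)

lemma ptrace_S_local:
  fixes A B C D :: "complex^'a::finite^'a"
  assumes "C ** A = mat 1"
  shows "ptrace_S ((A \<otimes>\<^sub>m B) ** M ** (C \<otimes>\<^sub>m D)) = B ** ptrace_S M ** D"
proof -
  have "swap_mat ** ((A \<otimes>\<^sub>m B) ** M ** (C \<otimes>\<^sub>m D)) ** swap_mat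
      = (B \<otimes>\<^sub>m A) ** (swap_mat ** M ** swap_mat) ** (D \<otimes>\<^sub>m C)"
    by (simp add: matrix_mul_assoc swap_mat_mult_tensor)
      (simp add: matrix_mul_assoc[symmetric] swap_mat_mult_tensor)
  then show ?thesis
    by (simp add: ptrace_S_eq_ptrace_E_swap ptrace_E_local assms)
qed

lemma ptrace_E_conj_tensor:
  assumes "munitary Y"
  shows "ptrace_E ((X \<otimes>\<^sub>m Y) ** M ** madj (X \<otimes>\<^sub>m Y)) = X ** ptrace_E M ** madj X"
  using assms by (simp add: madj_tensor ptrace_E_local munitary_def)

lemma ptrace_E_conj_swap_tensor:
  fixes X Y :: "complex^'a::finite^'a"
  assumes "munitary X"
  shows "ptrace_E ((swap_mat ** (X \<otimes>\<^sub>m Y)) ** M ** madj (swap_mat ** (X \<otimes>\<^sub>m Y)))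
    = Y ** ptrace_S M ** madj Y"
proof -
  have "(swap_mat ** (X \<otimes>\<^sub>m Y)) ** M ** madj (swap_mat ** (X \<otimes>\<^sub>m Y))
      = swap_mat ** ((X \<otimes>\<^sub>m Y) ** M ** madj (X \<otimes>\<^sub>m Y)) ** swap_mat"
    by (simp add: madj_mult madj_swap_mat matrix_mul_assoc)
  then show ?thesis
    using assms by (simp add: ptrace_S_eq_ptrace_E_swap[symmetric] madj_tensor ptrace_S_local munitary_def)
qed

section \<open>Positivity of the partial trace\<close>

definition qform :: "complex^'n^'n \<Rightarrow> complex^'n \<Rightarrow> complex" where
  "qform M v = (\<Sum>i\<in>UNIV. \<Sum>j\<in>UNIV. cnj (v $ i) * M $ i $ j * v $ j)"

lemma density_iff_qform:
  "density M \<longleftrightarrow> madj M = M \<and> (\<forall>v. 0 \<le> Re (qform M v)) \<and> mtrace M = 1"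
  by (simp add: density_def mpsd_def qform_def)

lemma qform_slice:
  fixes M :: "complex^('a::finite\<times>'b::finite)^('a\<times>'b)"
  shows "qform M (\<chi> p. if fst p = i then v $ snd p else 0)
    = (\<Sum>j\<in>UNIV. \<Sum>l\<in>UNIV. cnj (v $ j) * M $ (i, j) $ (i, l) * v $ l)"
proof -
  have "cnj (if fst p = i then v $ snd p else 0) * M $ p $ q * (if fst q = i then v $ snd q else 0)
     = (if fst p = i then (if fst q = i then cnj (v $ snd p) * M $ p $ q * v $ snd q else 0) else 0)"
    for p q
    by simp
  then show ?thesis
    by (simp add: qform_def if_distrib[of "sum _"] sum.If_cases sum_fst_eq)
qed

(* The vector in the sum is e_i \<otimes> v. *)
lemma qform_ptrace_S:
  "qform (ptrace_S M) v = (\<Sum>i\<in>UNIV. qform M (\<chi> p. if fst p = i then v $ snd p else 0))"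
proof -
  have "qform (ptrace_S M) v = (\<Sum>j\<in>UNIV. \<Sum>l\<in>UNIV. \<Sum>i\<in>UNIV. cnj (v $ j) * M $ (i, j) $ (i, l) * v $ l)"
    by (simp add: qform_def ptrace_S_def sum_distrib_left sum_distrib_right)
  also have "\<dots> = (\<Sum>j\<in>UNIV. \<Sum>i\<in>UNIV. \<Sum>l\<in>UNIV. cnj (v $ j) * M $ (i, j) $ (i, l) * v $ l)"
    by (rule sum.cong[OF refl], rule sum.swap)
  also have "\<dots> = (\<Sum>i\<in>UNIV. \<Sum>j\<in>UNIV. \<Sum>l\<in>UNIV. cnj (v $ j) * M $ (i, j) $ (i, l) * v $ l)"
    by (rule sum.swap)
  finally show ?thesis by (simp only: qform_slice)
qed

lemma madj_ptrace_S:
  assumes "madj M = M"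
  shows "madj (ptrace_S M) = ptrace_S M"
proof -
  have "cnj (M $ q $ p) = M $ p $ q" for p q
    using arg_cong[OF assms, of "\<lambda>A. A $ p $ q"] by (simp add: madj_def)
  then show ?thesis by (simp add: vec_eq_iff madj_def ptrace_S_def)
qed

lemma density_ptrace_S: "density M \<Longrightarrow> density (ptrace_S M)"
  by (simp add: density_iff_qform madj_ptrace_S mtrace_ptrace_S qform_ptrace_S sum_nonneg)

section \<open>Bell-diagonal two-qubit matrices\<close>

lemma UNIV_2_eq: "(UNIV :: 2 set) = {0, 1}"
  using exhaust_2 by fastforce

lemma forall_2_eq: "(\<forall>i::2. P i) \<longleftrightarrow> P 0 \<and> P 1"
  by (metis UNIV_2_eq UNIV_I insert_iff singletonD)

lemma forall_2_pair: "(\<forall>p::2\<times>2. P p) \<longleftrightarrow> P (0, 0) \<and> P (0, 1) \<and> P (1, 0) \<and> P (1, 1)"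
  by (simp add: forall_2_eq)

lemma sum_2_eq: "(\<Sum>i\<in>UNIV. f i) = f (0::2) + f 1"
  unfolding UNIV_2_eq by simp

lemma sum_2_pair: "(\<Sum>p\<in>UNIV. f p) = f (0, 0) + f (0, 1) + f (1, 0) + f (1::2, 1::2)"
  by (simp add: sum_UNIV_prod sum_2_eq add.assoc)

(* Diagonal in the Bell basis |00> + |11>, |00> - |11>, |01> + |10>, |01> - |10>,
   with eigenvalues a, b, c, d respectively. *)
definition bell_diag :: "complex \<Rightarrow> complex \<Rightarrow> complex \<Rightarrow> complex \<Rightarrow> complex^(2\<times>2)^(2\<times>2)" where
  "bell_diag a b c d = (\<chi> p q.
     if p = q then (if fst p = snd p then (a + b) / 2 else (c + d) / 2)
     else if fst p \<noteq> fst q \<and> snd p \<noteq> snd q then (if fst p = snd p then (a - b) / 2 else (c - d) / 2)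
     else 0)"

lemma bell_diag_mult:
  "bell_diag a b c d ** bell_diag a' b' c' d' = bell_diag (a * a') (b * b') (c * c') (d * d')"
  unfolding vec_eq_iff forall_2_pair
  by (simp add: bell_diag_def matrix_matrix_mult_def sum_2_pair) (simp add: field_simps)

lemma mat_1_eq_bell_diag: "mat 1 = bell_diag 1 1 1 1"
  unfolding vec_eq_iff forall_2_pair by (simp add: bell_diag_def mat_def)

lemma msmult_bell_diag: "msmult k (bell_diag a b c d) = bell_diag (k * a) (k * b) (k * c) (k * d)"
  unfolding vec_eq_iff forall_2_pair by (simp add: bell_diag_def msmult_def right_diff_distrib distrib_left)

lemma mpow_bell_diag: "mpow (bell_diag a b c d) n = bell_diag (a ^ n) (b ^ n) (c ^ n) (d ^ n)"
  by (induction n) (simp_all add: mat_1_eq_bell_diag bell_diag_mult)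

lemma suminf_exp_half_add_diff:
  fixes a b :: complex
  shows "(\<Sum>n. (a ^ n + b ^ n) / (2 * fact n)) = (exp a + exp b) / 2"
    and "(\<Sum>n. (a ^ n - b ^ n) / (2 * fact n)) = (exp a - exp b) / 2"
proof -
  have exp_sums: "(\<lambda>n. z ^ n / fact n) sums exp z" for z :: complex
    using exp_converges[of z] by (simp add: scaleR_conv_of_real divide_inverse mult.commute)
  have "(\<lambda>n. (a ^ n / fact n + b ^ n / fact n) / 2) sums ((exp a + exp b) / 2)"
    by (intro sums_divide sums_add exp_sums)
  moreover have "(\<lambda>n. (a ^ n / fact n - b ^ n / fact n) / 2) sums ((exp a - exp b) / 2)"
    by (intro sums_divide sums_diff exp_sums)
  moreover have "(a ^ n / fact n + b ^ n / fact n) / 2 = (a ^ n + b ^ n) / (2 * fact n)"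
    and "(a ^ n / fact n - b ^ n / fact n) / 2 = (a ^ n - b ^ n) / (2 * fact n)" for n
    by (simp_all add: field_simps)
  ultimately show "(\<Sum>n. (a ^ n + b ^ n) / (2 * fact n)) = (exp a + exp b) / 2"
    and "(\<Sum>n. (a ^ n - b ^ n) / (2 * fact n)) = (exp a - exp b) / 2"
    by (simp_all add: sums_iff)
qed

lemma mexp_bell_diag: "mexp (bell_diag a b c d) = bell_diag (exp a) (exp b) (exp c) (exp d)"
  unfolding vec_eq_iff forall_2_pair mexp_def mpow_bell_diag
  by (simp add: bell_diag_def suminf_exp_half_add_diff)

lemma Omega_eq_bell_diag:
  "Omega a1 a2 a3 = bell_diag (exp (- \<i> * (a1 - a2 + a3))) (exp (- \<i> * (a2 + a3 - a1)))
     (exp (- \<i> * (a1 + a2 - a3))) (exp (\<i> * (a1 + a2 + a3)))"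
proof -
  have hamiltonian: "msmult (- \<i>) (msmult (of_real a1) (pauli1 \<otimes>\<^sub>m pauli1)
        + msmult (of_real a2) (pauli2 \<otimes>\<^sub>m pauli2) + msmult (of_real a3) (pauli3 \<otimes>\<^sub>m pauli3))
      = bell_diag (- \<i> * (a1 - a2 + a3)) (- \<i> * (a2 + a3 - a1)) (- \<i> * (a1 + a2 - a3)) (\<i> * (a1 + a2 + a3))"
    unfolding vec_eq_iff forall_2_pair
    by (simp add: bell_diag_def msmult_def tensor_def pauli1_def pauli2_def pauli3_def)
      (simp add: algebra_simps)
  show ?thesis
    unfolding Omega_def hamiltonian mexp_bell_diag ..
qed

lemma Omega_eq_phase_bell_diag:
  "Omega a1 a2 a3 = msmult (exp (- \<i> * (a1 - a2 + a3)))
     (bell_diag 1 (exp (2 * \<i> * a1) / exp (2 * \<i> * a2)) (exp (2 * \<i> * a3) / exp (2 * \<i> * a2))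
       (exp (2 * \<i> * a1) * exp (2 * \<i> * a3)))"
proof -
  have "exp (- \<i> * (a1 - a2 + a3)) * (exp (2 * \<i> * a1) / exp (2 * \<i> * a2)) = exp (- \<i> * (a2 + a3 - a1))"
    and "exp (- \<i> * (a1 - a2 + a3)) * (exp (2 * \<i> * a3) / exp (2 * \<i> * a2)) = exp (- \<i> * (a1 + a2 - a3))"
    and "exp (- \<i> * (a1 - a2 + a3)) * (exp (2 * \<i> * a1) * exp (2 * \<i> * a3)) = exp (\<i> * (a1 + a2 + a3))"
    by (simp_all flip: exp_add exp_diff, simp_all add: algebra_simps)
  then show ?thesis
    by (simp add: Omega_eq_bell_diag msmult_bell_diag)
qed

lemma munitary_pauli1: "munitary pauli1"
  unfolding munitary_def vec_eq_iff forall_2_eq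
  by (simp add: madj_def pauli1_def matrix_matrix_mult_def sum_2_eq mat_def)

lemma munitary_pauli3: "munitary pauli3"
  unfolding munitary_def vec_eq_iff forall_2_eq
  by (simp add: madj_def pauli3_def matrix_matrix_mult_def sum_2_eq mat_def)

lemma tensor_mat_1_eq_bell_diag: "mat 1 \<otimes>\<^sub>m mat 1 = bell_diag 1 1 1 1"
  by (simp add: tensor_mat_1 mat_1_eq_bell_diag)

lemma tensor_pauli1: "pauli1 \<otimes>\<^sub>m pauli1 = bell_diag 1 (-1) 1 (-1)"
  unfolding vec_eq_iff forall_2_pair by (simp add: bell_diag_def tensor_def pauli1_def)

lemma tensor_pauli3: "pauli3 \<otimes>\<^sub>m pauli3 = bell_diag 1 1 (-1) (-1)"
  unfolding vec_eq_iff forall_2_pair by (simp add: bell_diag_def tensor_def pauli3_def)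

lemma swap_mat_eq_bell_diag: "swap_mat = bell_diag 1 1 1 (-1)"
  unfolding vec_eq_iff forall_2_pair by (simp add: bell_diag_def swap_mat_def)

lemma bell_diag_signs_eq_tensor:
  assumes "s\<^sup>2 = 1" "t\<^sup>2 = 1"
  obtains P where "munitary P" "bell_diag 1 s t (s * t) = P \<otimes>\<^sub>m P"
proof -
  obtain Q where Q: "munitary Q" "bell_diag 1 1 t t = Q \<otimes>\<^sub>m Q"
    using \<open>t\<^sup>2 = 1\<close> munitary_mat_1 munitary_pauli3 tensor_mat_1_eq_bell_diag tensor_pauli3
    unfolding power2_eq_1_iff by (metis (mono_tags))
  obtain R where R: "munitary R" "bell_diag 1 s 1 s = R \<otimes>\<^sub>m R"
    using \<open>s\<^sup>2 = 1\<close> munitary_mat_1 munitary_pauli1 tensor_mat_1_eq_bell_diag tensor_pauli1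
    unfolding power2_eq_1_iff by (metis (mono_tags))
  have "bell_diag 1 s t (s * t) = (Q ** R) \<otimes>\<^sub>m (Q ** R)"
    using bell_diag_mult[of 1 1 t t 1 s 1 s] by (simp add: Q R tensor_mult mult.commute)
  then show ?thesis
    using Q(1) R(1) munitary_mult that by blast
qed

section \<open>Gates of vanishing entangling power\<close>

lemma pairwise_products_eq_3:
  fixes c1 c2 c3 :: real
  assumes "c1 * (c2 + c3) + c2 * c3 = 3" "\<bar>c1\<bar> \<le> 1" "\<bar>c2\<bar> \<le> 1" "\<bar>c3\<bar> \<le> 1"
  shows "c2 = c1 \<and> c3 = c1 \<and> \<bar>c1\<bar> = 1"
proof -
  have le_1: "x * y \<le> 1" if "\<bar>x\<bar> \<le> 1" "\<bar>y\<bar> \<le> 1" for x y :: real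
  proof -
    have "\<bar>x\<bar> * \<bar>y\<bar> \<le> 1" using that by (simp add: mult_le_one)
    then show ?thesis by (metis abs_ge_self abs_mult order_trans)
  qed
  have 12: "c1 * c2 = 1" and 13: "c1 * c3 = 1" and 23: "c2 * c3 = 1"
    using le_1[of c1 c2] le_1[of c1 c3] le_1[of c2 c3] assms by (simp_all add: algebra_simps)
  have "c2 = (c1 * c3) * c2" using 13 by simp
  also have "\<dots> = c1 * (c2 * c3)" by (simp add: ac_simps)
  finally have "c2 = c1" using 23 by simp
  have "c3 = (c1 * c2) * c3" using 12 by simp
  also have "\<dots> = c1 * (c2 * c3)" by (simp add: ac_simps)
  finally have "c3 = c1" using 23 by simp
  moreover have "c1\<^sup>2 = 1" using 12 \<open>c2 = c1\<close> by (simp add: power2_eq_square)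
  then have "\<bar>c1\<bar> = 1" by (auto simp: power2_eq_1_iff)
  ultimately show ?thesis using \<open>c2 = c1\<close> by simp
qed

lemma exp_i_eq_cos_if_abs_cos_1:
  assumes "\<bar>cos x\<bar> = 1"
  shows "exp (\<i> * of_real x) = of_real (cos x)"
proof -
  have "(cos x)\<^sup>2 = 1"
    using assms power2_abs[of "cos x"] by simp
  then have "sin x = 0"
    using sin_cos_squared_add[of x] by simp
  then show ?thesis
    by (simp add: cis_conv_exp[symmetric] complex_eq_iff)
qed

lemma exp_2i_squared_eq_cos:
  assumes "\<bar>cos (4 * a)\<bar> = 1"
  shows "(exp (2 * \<i> * of_real a))\<^sup>2 = of_real (cos (4 * a))"
proof -
  have "(exp (2 * \<i> * of_real a))\<^sup>2 = exp (\<i> * of_real (4 * a))"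
    by (simp add: exp_of_nat_mult[symmetric] algebra_simps)
  then show ?thesis
    using exp_i_eq_cos_if_abs_cos_1[OF assms] by simp
qed

lemma ratios_of_square_roots:
  fixes w1 w2 w3 e :: complex
  assumes "w1\<^sup>2 = e" "w2\<^sup>2 = e" "w3\<^sup>2 = e" "e = 1 \<or> e = -1"
  shows "(w1 / w2)\<^sup>2 = 1" "(w3 / w2)\<^sup>2 = 1" "w1 * w3 = e * (w1 / w2 * (w3 / w2))"
  using assms by (auto simp: power2_eq_square field_simps)

lemma Omega_local_or_swap:
  assumes "cos (4 * a1) * (cos (4 * a2) + cos (4 * a3)) + cos (4 * a2) * cos (4 * a3) = 3"
  obtains c P where "c * cnj c = 1" "munitary P"
    "Omega a1 a2 a3 = msmult c (P \<otimes>\<^sub>m P) \<or> Omega a1 a2 a3 = msmult c (swap_mat ** (P \<otimes>\<^sub>m P))"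
proof -
  define e where "e = complex_of_real (cos (4 * a1))"
  define w where "w a = exp (2 * \<i> * complex_of_real a)" for a
  have "cos (4 * a2) = cos (4 * a1)" "cos (4 * a3) = cos (4 * a1)" "\<bar>cos (4 * a1)\<bar> = 1"
    using pairwise_products_eq_3[OF assms] by simp_all
  then have w_sq: "(w a1)\<^sup>2 = e" "(w a2)\<^sup>2 = e" "(w a3)\<^sup>2 = e" and e_cases: "e = 1 \<or> e = -1"
    by (simp_all add: w_def e_def exp_2i_squared_eq_cos abs_if split: if_splits)
  define s t where "s = w a1 / w a2" and "t = w a3 / w a2"
  obtain P where P: "munitary P" "bell_diag 1 s t (s * t) = P \<otimes>\<^sub>m P"
    using bell_diag_signs_eq_tensor ratios_of_square_roots(1,2)[OF w_sq e_cases] s_def t_def by metis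
  define E where "E = exp (- \<i> * (a1 - a2 + a3))"
  have "E * cnj E = 1"
    using complex_norm_square[of E] by (simp add: E_def)
  have "Omega a1 a2 a3 = msmult E (bell_diag 1 s t (w a1 * w a3))"
    unfolding E_def s_def t_def w_def by (rule Omega_eq_phase_bell_diag)
  then have Omega: "Omega a1 a2 a3 = msmult E (bell_diag 1 s t (e * (s * t)))"
    unfolding ratios_of_square_roots(3)[OF w_sq e_cases] s_def t_def .
  from e_cases show ?thesis
  proof
    assume "e = 1"
    then show ?thesis
      using that[OF \<open>E * cnj E = 1\<close> P(1)] Omega P(2) by simp
  next
    assume "e = -1"
    then have "bell_diag 1 s t (e * (s * t)) = swap_mat ** (P \<otimes>\<^sub>m P)"
      by (simp add: P(2)[symmetric] swap_mat_eq_bell_diag bell_diag_mult)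
    then show ?thesis
      using that[OF \<open>E * cnj E = 1\<close> P(1)] Omega by simp
  qed
qed

lemma ptrace_E_conj_local_gate:
  fixes L1 L2 R1 R2 P :: "complex^'a::finite^'a"
  assumes "munitary L2" "munitary P" "munitary R2" "c * cnj c = 1"
  defines "U \<equiv> (L1 \<otimes>\<^sub>m L2) ** msmult c (P \<otimes>\<^sub>m P) ** (R1 \<otimes>\<^sub>m R2)"
  shows "ptrace_E (U ** M ** madj U) = (L1 ** P ** R1) ** ptrace_E M ** madj (L1 ** P ** R1)"
proof -
  have "U = msmult c ((L1 ** P ** R1) \<otimes>\<^sub>m (L2 ** P ** R2))"
    by (simp add: U_def matrix_mult_msmult_left matrix_mult_msmult_right tensor_mult)
  moreover have "munitary (L2 ** P ** R2)"
    using assms(1-3) by (simp add: munitary_mult)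
  ultimately show ?thesis
    using assms(4) by (simp add: conj_msmult_phase ptrace_E_conj_tensor)
qed

lemma ptrace_E_conj_swap_gate:
  fixes L1 L2 R1 R2 P :: "complex^'a::finite^'a"
  assumes "munitary L2" "munitary P" "munitary R1" "c * cnj c = 1"
  defines "U \<equiv> (L1 \<otimes>\<^sub>m L2) ** msmult c (swap_mat ** (P \<otimes>\<^sub>m P)) ** (R1 \<otimes>\<^sub>m R2)"
  shows "ptrace_E (U ** M ** madj U) = (L1 ** P ** R2) ** ptrace_S M ** madj (L1 ** P ** R2)"
proof -
  have "U = msmult c (swap_mat ** ((L2 \<otimes>\<^sub>m L1) ** (P \<otimes>\<^sub>m P) ** (R1 \<otimes>\<^sub>m R2)))"
    by (simp add: U_def matrix_mult_msmult_left matrix_mult_msmult_right matrix_mul_assoc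
        flip: swap_mat_mult_tensor)
  also have "\<dots> = msmult c (swap_mat ** ((L2 ** P ** R1) \<otimes>\<^sub>m (L1 ** P ** R2)))"
    by (simp add: tensor_mult)
  finally have "U = msmult c (swap_mat ** ((L2 ** P ** R1) \<otimes>\<^sub>m (L1 ** P ** R2)))" .
  moreover have "munitary (L2 ** P ** R1)"
    using assms(1-3) by (simp add: munitary_mult)
  ultimately show ?thesis
    using assms(4) by (simp add: conj_msmult_phase ptrace_E_conj_swap_tensor)
qed

theorem theorem3:
  fixes L1 L2 R1 R2 :: "complex^2^2" and a1 a2 a3 :: real
    and \<rho> :: "complex^(2\<times>2)^(2\<times>2)"
  assumes "munitary L1" "munitary L2" "munitary R1" "munitary R2"
    and "(3 - cos (4*a1) * (cos (4*a2) + cos (4*a3)) - cos (4*a2) * cos (4*a3)) / 4 = 0"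
    and "density \<rho>"
  shows "let U = (L1 \<otimes>\<^sub>m L2) ** Omega a1 a2 a3 ** (R1 \<otimes>\<^sub>m R2) in
         \<exists>\<zeta> :: complex^2^2. density \<zeta> \<and>
           ptrace_E (U ** \<rho> ** madj U) = ptrace_E (U ** (ptrace_E \<rho> \<otimes>\<^sub>m \<zeta>) ** madj U)"
proof -
  have "cos (4 * a1) * (cos (4 * a2) + cos (4 * a3)) + cos (4 * a2) * cos (4 * a3) = 3"
    using assms(5) by (simp add: algebra_simps)
  then obtain c P where c: "c * cnj c = 1" and P: "munitary P"
    and Omega: "Omega a1 a2 a3 = msmult c (P \<otimes>\<^sub>m P) \<or> Omega a1 a2 a3 = msmult c (swap_mat ** (P \<otimes>\<^sub>m P))"
    by (rule Omega_local_or_swap)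
  define U where "U = (L1 \<otimes>\<^sub>m L2) ** Omega a1 a2 a3 ** (R1 \<otimes>\<^sub>m R2)"
  have marginals: "ptrace_E (ptrace_E \<rho> \<otimes>\<^sub>m ptrace_S \<rho>) = ptrace_E \<rho>"
    "ptrace_S (ptrace_E \<rho> \<otimes>\<^sub>m ptrace_S \<rho>) = ptrace_S \<rho>"
    using assms(6) by (simp_all add: density_def ptrace_product_of_marginals)
  from Omega have "ptrace_E (U ** \<rho> ** madj U) = ptrace_E (U ** (ptrace_E \<rho> \<otimes>\<^sub>m ptrace_S \<rho>) ** madj U)"
  proof
    assume "Omega a1 a2 a3 = msmult c (P \<otimes>\<^sub>m P)"
    then show ?thesis
      using ptrace_E_conj_local_gate[OF assms(2) P assms(4) c] marginals(1) by (simp add: U_def)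
  next
    assume "Omega a1 a2 a3 = msmult c (swap_mat ** (P \<otimes>\<^sub>m P))"
    then show ?thesis
      using ptrace_E_conj_swap_gate[OF assms(2) P assms(3) c] marginals(2) by (simp add: U_def)
  qed
  then show ?thesis
    using density_ptrace_S[OF assms(6)] by (auto simp: Let_def U_def)
qed

end
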